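(* Let $\{x_i\}_{i\in[N]}$ be the global solution of the delayed consensus system described in the context. Then for all $K\in\mathbb{N}$, \[ \Delta^K_x\le\Delta^0_x+(1+\sigma)\Delta^{K-1}_x+\sigma\sum_{k=0}^{K-1}\Delta^k_x. \]
   Context: Let $N\ge2$, $d\ge1$ be integers, $[N]=\{1,\dots,N\}$, $0\le\sigma\le\tau$. Let $\psi:[0,\infty)\to[0,\infty)$ be continuous, nonincreasing, positive everywhere, with $\sup\psi\le1$. Given $x_i^0\in C([-\tau,0],\mathbb{R}^d)$, $\{x_i\}$ is the global solution (continuous on $[-\tau,\infty)$, continuously differentiable on $[0,\infty)$) of $\dot x_i(t)=\sum_{j\ne i}a_{ij}(t)(x_j(t-\tau)-x_i(t-\sigma))$ for $t>0$, with $a_{ij}(t)=\frac1{N-1}\psi(|x_i(t-\sigma)-x_j(t-\tau)|)$, and $x_i=x_i^0$ on $[-\tau,0]$. Define $\Delta^0_x:=\max_{i,j\in[N]}\max_{s,t\in[-\tau,0]}|x_i^0(s)-x_j^0(t)|$ and, for $K\in\mathbb{N}$ ($K\ge1$), \[ \Delta^K_x:=\max_{i,j\in[N]}\max_{t\in[-\tau,K\sigma]}\max_{s\in[(K-1)\sigma,K\sigma]}|x_j(t)-x_i(s)|. \] *)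

theory Defs
  imports "HOL-Analysis.Analysis"
begin

definition Delta :: "nat \<Rightarrow> real \<Rightarrow> real \<Rightarrow> (nat \<Rightarrow> real \<Rightarrow> real^'d) \<Rightarrow> nat \<Rightarrow> real" where
  "Delta N \<tau> \<sigma> x K =
    (if K = 0 then
       Sup {norm (x i s - x j t) | i j s t. i \<in> {1..N} \<and> j \<in> {1..N} \<and> s \<in> {-\<tau>..0} \<and> t \<in> {-\<tau>..0}}
     else
       Sup {norm (x j t - x i s) | i j t s. i \<in> {1..N} \<and> j \<in> {1..N} \<and>
              t \<in> {-\<tau>..real K * \<sigma>} \<and> s \<in> {(real K - 1) * \<sigma>..real K * \<sigma>}})"

end

theory Submission
  imports Defs
begin

text \<open>On the window \<open>[(K-1)\<sigma>, K\<sigma>]\<close> both delayed arguments \<open>t - \<tau>\<close> and \<open>t - \<sigma>\<close> of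
  the right-hand side lie in the region measured by \<open>Delta (K - 1)\<close>. There are \<open>N - 1\<close>
  interaction terms with weights at most \<open>1/(N - 1)\<close>, so every velocity is bounded by
  \<open>Delta (K - 1)\<close> there and every agent moves by at most \<open>\<sigma> Delta (K - 1)\<close> across the
  window. Comparing positions through the time \<open>(K-1)\<sigma>\<close> gives
  \<open>Delta K \<le> (1 + 2\<sigma>) Delta (K - 1)\<close>, which implies the claim because \<open>Delta (K - 1)\<close> is
  one of the nonnegative summands.\<close>

definition pair_spread ::
    "'i set \<Rightarrow> ('i \<Rightarrow> 'b \<Rightarrow> 'a::real_normed_vector) \<Rightarrow> 'b set \<Rightarrow> 'b set \<Rightarrow> real" where
  "pair_spread I x T U = Sup {norm (x j t - x i s) | i j t s. i \<in> I \<and> j \<in> I \<and> t \<in> T \<and> s \<in> U}"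

lemma norm_diff_le_pair_spread:
  fixes x :: "'i \<Rightarrow> 'b::topological_space \<Rightarrow> 'a::real_normed_vector"
  assumes "finite I" "compact S" "\<And>i. i \<in> I \<Longrightarrow> continuous_on S (x i)" "T \<subseteq> S" "U \<subseteq> S"
    and "i \<in> I" "j \<in> I" "t \<in> T" "s \<in> U"
  shows "norm (x j t - x i s) \<le> pair_spread I x T U"
proof -
  have "bounded (\<Union>i\<in>I. x i ` S)"
    using assms(1-3) by (intro bounded_UN ballI compact_imp_bounded compact_continuous_image)
  then obtain B where B: "\<And>i t. i \<in> I \<Longrightarrow> t \<in> S \<Longrightarrow> norm (x i t) \<le> B"
    unfolding bounded_iff by blast
  have "bdd_above {norm (x j t - x i s) | i j t s. i \<in> I \<and> j \<in> I \<and> t \<in> T \<and> s \<in> U}"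
  proof (rule bdd_aboveI, clarify)
    fix i j t s assume "i \<in> I" "j \<in> I" "t \<in> T" "s \<in> U"
    then have "norm (x j t) \<le> B" "norm (x i s) \<le> B" using B assms(4,5) by auto
    then show "norm (x j t - x i s) \<le> 2 * B"
      using norm_triangle_ineq4[of "x j t" "x i s"] by linarith
  qed
  then show ?thesis
    unfolding pair_spread_def by (rule cSup_upper[rotated]) (use assms(6-9) in blast)
qed

lemma pair_spread_leI:
  assumes "I \<noteq> {}" "T \<noteq> {}" "U \<noteq> {}"
    and "\<And>i j t s. i \<in> I \<Longrightarrow> j \<in> I \<Longrightarrow> t \<in> T \<Longrightarrow> s \<in> U \<Longrightarrow> norm (x j t - x i s) \<le> M"
  shows "pair_spread I x T U \<le> M"
  unfolding pair_spread_def using assms by (intro cSup_least) auto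

lemma Delta_eq_pair_spread:
  "Delta N \<tau> \<sigma> x K = pair_spread {1..N} x {-\<tau>..real K * \<sigma>}
     (if K = 0 then {-\<tau>..0} else {(real K - 1) * \<sigma>..real K * \<sigma>})"
proof (cases "K = 0")
  case True
  have "{norm (x i s - x j t) | i j s t. i \<in> {1..N} \<and> j \<in> {1..N} \<and> s \<in> {-\<tau>..0} \<and> t \<in> {-\<tau>..0}}
      = {norm (x j t - x i s) | i j t s. i \<in> {1..N} \<and> j \<in> {1..N} \<and> t \<in> {-\<tau>..0} \<and> s \<in> {-\<tau>..0}}"
    by blast
  then show ?thesis using True by (simp add: Delta_def pair_spread_def)
qed (simp add: Delta_def pair_spread_def)

text \<open>For \<open>K = 0\<close> both arguments of \<open>Delta\<close> range over \<open>[-\<tau>, 0]\<close>; the window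
  \<open>[K\<sigma> - \<sigma>, K\<sigma>] = [-\<sigma>, 0]\<close> lies inside it only because \<open>\<sigma> \<le> \<tau>\<close>.\<close>

lemma norm_diff_le_Delta:
  fixes x :: "nat \<Rightarrow> real \<Rightarrow> real^'d"
  assumes cont: "\<And>i. i \<in> {1..N} \<Longrightarrow> continuous_on {-\<tau>..} (x i)"
    and "0 \<le> \<sigma>" "\<sigma> \<le> \<tau>"
    and "i \<in> {1..N}" "j \<in> {1..N}" "t \<in> {-\<tau>..real K * \<sigma>}" "s \<in> {real K * \<sigma> - \<sigma>..real K * \<sigma>}"
  shows "norm (x j t - x i s) \<le> Delta N \<tau> \<sigma> x K"
  unfolding Delta_eq_pair_spread
proof (rule norm_diff_le_pair_spread[where S = "{-\<tau>..real K * \<sigma>}"])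
  show "continuous_on {-\<tau>..real K * \<sigma>} (x i)" if "i \<in> {1..N}" for i
    using cont[OF that] by (rule continuous_on_subset) auto
  have "-\<tau> \<le> real K * \<sigma> - \<sigma>"
    using assms(2,3) mult_nonneg_nonneg[of "real K" \<sigma>] by linarith
  then show "s \<in> (if K = 0 then {-\<tau>..0} else {(real K - 1) * \<sigma>..real K * \<sigma>})"
    "(if K = 0 then {-\<tau>..0} else {(real K - 1) * \<sigma>..real K * \<sigma>}) \<subseteq> {-\<tau>..real K * \<sigma>}"
    using assms(2,3,7) by (auto simp: left_diff_distrib)
qed (use assms(4-6) in auto)

lemma Delta_nonneg:
  fixes x :: "nat \<Rightarrow> real \<Rightarrow> real^'d"
  assumes "N \<ge> 1" "\<And>i. i \<in> {1..N} \<Longrightarrow> continuous_on {-\<tau>..} (x i)" "0 \<le> \<sigma>" "\<sigma> \<le> \<tau>"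
  shows "0 \<le> Delta N \<tau> \<sigma> x K"
proof -
  have "-\<tau> \<le> real K * \<sigma>"
    using assms(3,4) mult_nonneg_nonneg[of "real K" \<sigma>] by linarith
  then have "norm (x 1 (real K * \<sigma>) - x 1 (real K * \<sigma>)) \<le> Delta N \<tau> \<sigma> x K"
    using assms by (intro norm_diff_le_Delta) auto
  then show ?thesis by simp
qed

lemma Delta_leI:
  fixes x :: "nat \<Rightarrow> real \<Rightarrow> real^'d"
  assumes "K \<ge> 1" "N \<ge> 1" "0 \<le> \<sigma>" "0 \<le> \<tau>"
    and "\<And>i j t s. i \<in> {1..N} \<Longrightarrow> j \<in> {1..N} \<Longrightarrow> t \<in> {-\<tau>..real K * \<sigma>} \<Longrightarrow>
           s \<in> {(real K - 1) * \<sigma>..real K * \<sigma>} \<Longrightarrow> norm (x j t - x i s) \<le> M"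
  shows "Delta N \<tau> \<sigma> x K \<le> M"
proof -
  have "-\<tau> \<le> real K * \<sigma>"
    using assms(3,4) mult_nonneg_nonneg[of "real K" \<sigma>] by linarith
  then show ?thesis
    unfolding Delta_eq_pair_spread using assms
    by (intro pair_spread_leI) (auto simp: left_diff_distrib)
qed

lemma norm_sum_weighted_mean_le:
  fixes v :: "'i \<Rightarrow> 'a::real_normed_vector"
  assumes "finite A" "A \<noteq> {}" "\<And>j. j \<in> A \<Longrightarrow> 0 \<le> w j" "\<And>j. j \<in> A \<Longrightarrow> w j \<le> 1"
    and "\<And>j. j \<in> A \<Longrightarrow> norm (v j) \<le> D"
  shows "norm (\<Sum>j\<in>A. (w j / real (card A)) *\<^sub>R v j) \<le> D"
proof -
  have card: "0 < real (card A)" using assms(1,2) by (simp add: card_gt_0_iff)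
  have "norm (\<Sum>j\<in>A. (w j / real (card A)) *\<^sub>R v j) \<le> (\<Sum>j\<in>A. w j / real (card A) * norm (v j))"
    using norm_sum[of "\<lambda>j. (w j / real (card A)) *\<^sub>R v j" A] assms(3) by simp
  also have "\<dots> \<le> (\<Sum>j\<in>A. D / real (card A))"
  proof (rule sum_mono)
    fix j assume j: "j \<in> A"
    have "w j * norm (v j) \<le> 1 * D"
      using assms(3-5)[OF j] by (intro mult_mono) auto
    then show "w j / real (card A) * norm (v j) \<le> D / real (card A)"
      using card by (simp add: divide_right_mono)
  qed
  also have "\<dots> = D" using card by simp
  finally show ?thesis .
qed

lemma norm_diff_le_derivative_bound:
  fixes f :: "real \<Rightarrow> 'a::real_normed_vector"
  assumes "a \<le> b" "continuous_on {a..b} f"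
    and "\<And>t. a < t \<Longrightarrow> t < b \<Longrightarrow> (f has_vector_derivative f' t) (at t)"
    and "\<And>t. a < t \<Longrightarrow> t < b \<Longrightarrow> norm (f' t) \<le> B"
  shows "norm (f b - f a) \<le> B * (b - a)"
proof (cases "a = b")
  case False
  then have "a < b" using assms(1) by simp
  have "norm (f b - f a) \<le> B * b - B * a"
    by (rule differentiable_bound_general[OF \<open>a < b\<close> assms(2) _ assms(3) _ assms(4)])
      (auto intro!: continuous_intros derivative_eq_intros
        simp: has_real_derivative_iff_has_vector_derivative[symmetric])
  then show ?thesis by (simp add: right_diff_distrib)
qed simp

definition consensus_field ::
    "nat \<Rightarrow> real \<Rightarrow> real \<Rightarrow> (real \<Rightarrow> real) \<Rightarrow> (nat \<Rightarrow> real \<Rightarrow> real^'d) \<Rightarrow> nat \<Rightarrow> real \<Rightarrow> real^'d"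
  where
  "consensus_field N \<tau> \<sigma> \<psi> x i t =
     (\<Sum>j\<in>{1..N} - {i}. (\<psi> (norm (x i (t - \<sigma>) - x j (t - \<tau>))) / real (N - 1))
                        *\<^sub>R (x j (t - \<tau>) - x i (t - \<sigma>)))"

lemma norm_consensus_field_le:
  assumes "N \<ge> 2" "i \<in> {1..N}"
    and "\<And>r. 0 \<le> r \<Longrightarrow> 0 \<le> \<psi> r" "\<And>r. 0 \<le> r \<Longrightarrow> \<psi> r \<le> 1"
    and "\<And>j. j \<in> {1..N} \<Longrightarrow> norm (x j (t - \<tau>) - x i (t - \<sigma>)) \<le> D"
  shows "norm (consensus_field N \<tau> \<sigma> \<psi> x i t) \<le> D"
proof -
  have card: "card ({1..N} - {i}) = N - 1" using assms(2) by simp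
  then have "0 < card ({1..N} - {i})" using assms(1) by simp
  then have "{1..N} - {i} \<noteq> {}" by (simp add: card_gt_0_iff)
  then show ?thesis
    unfolding consensus_field_def card[symmetric] using assms(3-5)
    by (intro norm_sum_weighted_mean_le) auto
qed

locale delayed_consensus =
  fixes N :: nat and \<tau> \<sigma> :: real and \<psi> :: "real \<Rightarrow> real" and x :: "nat \<Rightarrow> real \<Rightarrow> real^'d"
  assumes two_agents: "N \<ge> 2"
    and delays: "0 \<le> \<sigma>" "\<sigma> \<le> \<tau>"
    and psi_nonneg: "\<And>r. 0 \<le> r \<Longrightarrow> 0 \<le> \<psi> r"
    and psi_le_one: "\<And>r. 0 \<le> r \<Longrightarrow> \<psi> r \<le> 1"
    and continuous: "\<And>i. i \<in> {1..N} \<Longrightarrow> continuous_on {-\<tau>..} (x i)"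
    and ode: "\<And>i t. i \<in> {1..N} \<Longrightarrow> 0 < t \<Longrightarrow>
                (x i has_vector_derivative consensus_field N \<tau> \<sigma> \<psi> x i t) (at t)"
begin

lemma Delta_nonneg: "0 \<le> Delta N \<tau> \<sigma> x K"
  using two_agents continuous delays by (intro Delta_nonneg) auto

lemma norm_drift_le_Delta:
  assumes "i \<in> {1..N}" "u \<in> {real K * \<sigma>..real K * \<sigma> + \<sigma>}"
  shows "norm (x i u - x i (real K * \<sigma>)) \<le> \<sigma> * Delta N \<tau> \<sigma> x K"
proof -
  let ?c = "real K * \<sigma>" and ?D = "Delta N \<tau> \<sigma> x K"
  have "0 \<le> ?c" using delays by simp
  then have "-\<tau> \<le> ?c" using delays by linarith
  have "norm (x i u - x i ?c) \<le> ?D * (u - ?c)"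
  proof (rule norm_diff_le_derivative_bound)
    show "continuous_on {?c..u} (x i)"
      using continuous[OF assms(1)] by (rule continuous_on_subset) (use \<open>-\<tau> \<le> ?c\<close> in auto)
    fix r assume r: "?c < r" "r < u"
    then have "0 < r" using \<open>0 \<le> ?c\<close> by linarith
    then show "(x i has_vector_derivative consensus_field N \<tau> \<sigma> \<psi> x i r) (at r)"
      by (rule ode[OF assms(1)])
    show "norm (consensus_field N \<tau> \<sigma> \<psi> x i r) \<le> ?D"
      using two_agents assms psi_nonneg psi_le_one r delays \<open>0 < r\<close>
      by (intro norm_consensus_field_le norm_diff_le_Delta[OF continuous]) auto
  qed (use assms(2) in auto)
  also have "\<dots> \<le> ?D * \<sigma>"
    using assms(2) Delta_nonneg by (intro mult_left_mono) auto
  finally show ?thesis by (simp add: mult.commute)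
qed

lemma Delta_le_step:
  assumes "K \<ge> 1"
  shows "Delta N \<tau> \<sigma> x K \<le> (1 + 2 * \<sigma>) * Delta N \<tau> \<sigma> x (K - 1)"
proof -
  define c where "c = real (K - 1) * \<sigma>"
  let ?D = "Delta N \<tau> \<sigma> x (K - 1)"
  have window: "real K * \<sigma> = c + \<sigma>" "(real K - 1) * \<sigma> = c"
    using assms by (auto simp: c_def of_nat_diff algebra_simps)
  have "0 \<le> c" using delays by (simp add: c_def)
  have past: "norm (x j t - x i c) \<le> ?D" if "i \<in> {1..N}" "j \<in> {1..N}" "t \<in> {-\<tau>..c}" for i j t
    using that delays by (intro norm_diff_le_Delta[OF continuous]) (auto simp: c_def)
  have drift: "norm (x i u - x i c) \<le> \<sigma> * ?D" if "i \<in> {1..N}" "u \<in> {c..c + \<sigma>}" for i u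
    using norm_drift_le_Delta[of i u "K - 1"] that by (simp add: c_def)
  show ?thesis
  proof (rule Delta_leI[OF assms])
    fix i j t s
    assume i: "i \<in> {1..N}" and j: "j \<in> {1..N}" and t: "t \<in> {-\<tau>..real K * \<sigma>}"
      and s: "s \<in> {(real K - 1) * \<sigma>..real K * \<sigma>}"
    have "norm (x j t - x i c) \<le> (1 + \<sigma>) * ?D"
    proof (cases "t \<le> c")
      case True
      moreover have "0 \<le> \<sigma> * ?D" using delays Delta_nonneg by simp
      ultimately show ?thesis using past[OF i j, of t] t by (simp add: distrib_right)
    next
      case False
      have "norm (x j t - x i c) \<le> norm (x j t - x j c) + norm (x j c - x i c)"
        using norm_triangle_ineq[of "x j t - x j c" "x j c - x i c"] by simp
      then show ?thesis
        using drift[OF j, of t] past[OF i j, of c] False t window \<open>0 \<le> c\<close> delays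
        by (auto simp: algebra_simps)
    qed
    moreover have "norm (x i s - x i c) \<le> \<sigma> * ?D"
      using drift[OF i] s window by auto
    moreover have "norm (x j t - x i s) \<le> norm (x j t - x i c) + norm (x i s - x i c)"
      using norm_triangle_ineq4[of "x j t - x i c" "x i s - x i c"] by simp
    ultimately show "norm (x j t - x i s) \<le> (1 + 2 * \<sigma>) * ?D"
      by (simp add: algebra_simps)
  qed (use two_agents delays in auto)
qed

end

text \<open>Only continuity of the solution on \<open>[-\<tau>, \<infinity>)\<close>, the equation for \<open>t > 0\<close> and the bounds
  \<open>0 < \<psi> \<le> 1\<close> are needed.\<close>

theorem lemma3p6:
  fixes N :: nat and \<sigma> \<tau> :: real and \<psi> :: "real \<Rightarrow> real"
    and x :: "nat \<Rightarrow> real \<Rightarrow> real^'d" and K :: nat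
  assumes N2: "N \<ge> 2"
    and sig: "0 \<le> \<sigma>" "\<sigma> \<le> \<tau>"
    and psi_cont: "continuous_on {0..} \<psi>"
    and psi_mono: "\<And>a b. 0 \<le> a \<Longrightarrow> a \<le> b \<Longrightarrow> \<psi> b \<le> \<psi> a"
    and psi_pos: "\<And>r. 0 \<le> r \<Longrightarrow> 0 < \<psi> r"
    and psi_le1: "\<And>r. 0 \<le> r \<Longrightarrow> \<psi> r \<le> 1"
    and x_cont: "\<And>i. i \<in> {1..N} \<Longrightarrow> continuous_on {-\<tau>..} (x i)"
    and x_C1: "\<And>i. i \<in> {1..N} \<Longrightarrow> \<exists>x'. continuous_on {0..} x' \<and>
                 (\<forall>t\<ge>0. (x i has_vector_derivative x' t) (at t within {0..}))"
    and x_ode: "\<And>i t. i \<in> {1..N} \<Longrightarrow> t > 0 \<Longrightarrow>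
        (x i has_vector_derivative
          (\<Sum>j\<in>{1..N} - {i}. (\<psi> (norm (x i (t - \<sigma>) - x j (t - \<tau>)) ) / real (N - 1))
                               *\<^sub>R (x j (t - \<tau>) - x i (t - \<sigma>)))) (at t)"
    and K1: "K \<ge> 1"
  shows "Delta N \<tau> \<sigma> x K \<le> Delta N \<tau> \<sigma> x 0 + (1 + \<sigma>) * Delta N \<tau> \<sigma> x (K - 1)
           + \<sigma> * (\<Sum>k<K. Delta N \<tau> \<sigma> x k)"
proof -
  interpret delayed_consensus N \<tau> \<sigma> \<psi> x
    using N2 sig psi_pos psi_le1 x_cont x_ode
    by unfold_locales (auto simp: consensus_field_def less_imp_le)
  have "Delta N \<tau> \<sigma> x (K - 1) \<le> (\<Sum>k<K. Delta N \<tau> \<sigma> x k)"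
    using K1 Delta_nonneg by (intro member_le_sum) auto
  then have "\<sigma> * Delta N \<tau> \<sigma> x (K - 1) \<le> \<sigma> * (\<Sum>k<K. Delta N \<tau> \<sigma> x k)"
    using sig(1) by (rule mult_left_mono)
  with Delta_le_step[OF K1] Delta_nonneg[of 0] show ?thesis
    by (simp add: algebra_simps)
qed

end
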